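(* Let $\Lambda$ be the function defined below. If $0<\beta<\frac{\pi}{2}$, then $$D_{\beta,0}=\min_{\{\theta:\frac{1}{11}\beta\le\theta\le 2\beta\}}\Lambda(\beta,\theta),$$ while if $\frac{\pi}{2}\le\beta<\infty$, then $$D_{\beta,0}=\min_{\{\theta:\frac{1}{7}\le\theta\le\pi\}}\Lambda(\beta,\theta).$$
   Context: Let $\mathcal{H}=\{(x,v)\in\mathbb{R}^2:v\ge 0\}$ and let $d_H$ be the Riemannian distance on $\mathcal{H}$ induced by the metric $ds^2=v^{-1}(dx^2+dv^2)$ on the open upper half-plane (extended to the boundary $v=0$ as the infimum of lengths of curves). For $\beta,\gamma\in\mathbb{R}$ let $L_{\beta,\gamma}=\{(x,v)\in\mathcal{H}:x=\beta+\gamma v,\ v\ge0\}$ and $$D_{\beta,\gamma}=\inf\Big\{\tfrac{1}{2}d_H((0,1),(x,v))^2:(x,v)\in L_{\beta,\gamma}\Big\}.$$ Define, for $\theta\ne0$ and $x$ with $2(\theta-\sin\theta)x+2(1-\cos\theta)-\theta^2\ge0$, $$\Lambda(x,\theta)=\frac{\theta^2}{(\theta-\sin\theta)^2}\Big[(\theta-\sin\theta)x+2(1-\cos\theta)-\theta\sin\theta-(1-\cos\theta)\sqrt{2(\theta-\sin\theta)x+2(1-\cos\theta)-\theta^2}\Big],$$ with the nonnegative square root. *)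

theory Defs
  imports "HOL-Analysis.Analysis"
begin

definition HP :: "(real \<times> real) set" where
  "HP = {p. snd p \<ge> 0}"

definition admissible_curve :: "(real \<Rightarrow> real \<times> real) \<Rightarrow> real \<times> real \<Rightarrow> real \<times> real \<Rightarrow> bool" where
  "admissible_curve g p q \<longleftrightarrow>
     g piecewise_C1_differentiable_on {0..1} \<and> g 0 = p \<and> g 1 = q \<and>
     (\<forall>t\<in>{0<..<1}. snd (g t) > 0)"

text \<open>Riemannian length w.r.t. ds^2 = v^{-1}(dx^2+dv^2): integrand |g'(t)| / sqrt(v(t)).\<close>
definition has_H_length :: "(real \<Rightarrow> real \<times> real) \<Rightarrow> real \<Rightarrow> bool" where
  "has_H_length g L \<longleftrightarrow>
     ((\<lambda>t. norm (vector_derivative g (at t)) / sqrt (snd (g t))) has_integral L) {0..1}"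

definition dH :: "real \<times> real \<Rightarrow> real \<times> real \<Rightarrow> real" where
  "dH p q = Inf {L. \<exists>g. admissible_curve g p q \<and> has_H_length g L}"

definition Lline :: "real \<Rightarrow> real \<Rightarrow> (real \<times> real) set" where
  "Lline \<beta> \<gamma> = {(x, v). v \<ge> 0 \<and> x = \<beta> + \<gamma> * v}"

definition Dfun :: "real \<Rightarrow> real \<Rightarrow> real" where
  "Dfun \<beta> \<gamma> = Inf {(1/2) * (dH (0, 1) p)\<^sup>2 | p. p \<in> Lline \<beta> \<gamma>}"

definition Lambda :: "real \<Rightarrow> real \<Rightarrow> real" where
  "Lambda x \<theta> = \<theta>\<^sup>2 / (\<theta> - sin \<theta>)\<^sup>2 *
     ((\<theta> - sin \<theta>) * x + 2 * (1 - cos \<theta>) - \<theta> * sin \<theta>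
      - (1 - cos \<theta>) * sqrt (2 * (\<theta> - sin \<theta>) * x + 2 * (1 - cos \<theta>) - \<theta>\<^sup>2))"

end

theory Submission
  imports Defs
begin

(* For x < b, the line x = b is reached from (x, v) most cheaply along the cycloid arc that
   meets it orthogonally, at its apex; its length line_calibration b (x, v) is a calibration:
   along any curve its derivative is at least minus the metric speed |g'| / sqrt v.  So every
   curve from (0,1) to the line has length at least line_calibration b (0, 1), with equality
   for that arc, whose angle th satisfies b = (th + sin th) / (1 + cos th); this gives
   D(b,0) = Lambda(b,th).  For any angle th' <= 2b, Lambda(b,th') is half the squared length
   of some cycloid arc of angle th' from (0,1) to the line, hence at least D(b,0).  Elementary
   bounds on the critical angle th place it in the two intervals of the statement. *)

text \<open>A cycloid arch of radius a, traversed from angle pi - 2w up to its apex at angle pi,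
  has horizontal width 2a * arc_width w, starting height 2a * (cos w)^2 and, in the metric
  of the half-plane, length 2w * sqrt (2a).\<close>

definition arc_width :: "real \<Rightarrow> real" where
  "arc_width w = w + sin w * cos w"

definition aspect :: "real \<Rightarrow> real" where
  "aspect w = (cos w)\<^sup>2 / arc_width w"

definition aspect_angle :: "real \<Rightarrow> real" where
  "aspect_angle u = (THE w. 0 < w \<and> w \<le> pi/2 \<and> aspect w = u)"

lemma arc_width_pos: assumes "0 < w" "w \<le> pi/2" shows "arc_width w > 0"
proof -
  have "sin w \<ge> 0" "cos w \<ge> 0" using assms by (auto intro!: sin_ge_zero cos_ge_zero)
  thus ?thesis using assms unfolding arc_width_def by (simp add: add_pos_nonneg)
qed

lemma arc_width_mono: assumes "a \<le> b" shows "arc_width a \<le> arc_width b"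
proof (rule DERIV_nonneg_imp_nondecreasing[OF assms])
  fix x
  have "DERIV arc_width x :> 1 + ((cos x)\<^sup>2 - (sin x)\<^sup>2)"
    unfolding arc_width_def by (auto intro!: derivative_eq_intros simp: power2_eq_square)
  moreover have "1 + ((cos x)\<^sup>2 - (sin x)\<^sup>2) \<ge> 0"
    using sin_cos_squared_add[of x] by (smt (verit) zero_le_power2)
  ultimately show "\<exists>y. DERIV arc_width x :> y \<and> y \<ge> 0" by blast
qed

lemma aspect_strict_antimono: assumes "0 < a" "a < b" "b \<le> pi/2" shows "aspect b < aspect a"
proof -
  have "cos b < cos a" "cos b \<ge> 0" using assms by (auto intro!: cos_monotone_0_pi cos_ge_zero)
  hence c2: "(cos b)\<^sup>2 < (cos a)\<^sup>2" by (simp add: power_strict_mono)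
  have pos: "arc_width a > 0" using assms by (intro arc_width_pos) auto
  have "(cos b)\<^sup>2 / arc_width b \<le> (cos b)\<^sup>2 / arc_width a"
    using pos arc_width_mono[of a b] assms by (intro divide_left_mono) auto
  also have "\<dots> < (cos a)\<^sup>2 / arc_width a" using c2 pos by (simp add: divide_strict_right_mono)
  finally show ?thesis unfolding aspect_def .
qed

lemma aspect_inj:
  assumes "0 < a" "a \<le> pi/2" "0 < b" "b \<le> pi/2" "aspect a = aspect b" shows "a = b"
  using aspect_strict_antimono[of a b] aspect_strict_antimono[of b a] assms
  by (cases a b rule: linorder_cases) auto

lemma isCont_aspect: assumes "0 < w" "w \<le> pi/2" shows "isCont aspect w"
  using arc_width_pos[OF assms] unfolding aspect_def arc_width_def by (auto intro!: continuous_intros)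

lemma aspect_pi_half: "aspect (pi/2) = 0"
  unfolding aspect_def by simp

lemma aspect_unbounded: assumes "y \<ge> 0" shows "\<exists>a. 0 < a \<and> a \<le> pi/3 \<and> aspect a \<ge> y"
proof -
  define a where "a = min (pi/3) (1/(8*(y+1)))"
  have a: "0 < a" "a \<le> pi/3" "a \<le> 1/(8*(y+1))" using assms pi_gt3 unfolding a_def by auto
  have "cos a \<ge> cos (pi/3)" using a by (intro cos_monotone_0_pi_le) auto
  hence "1/4 \<le> (cos a)\<^sup>2"
    using mult_mono[of "1/2" "cos a" "1/2" "cos a"] by (simp add: cos_60 power2_eq_square)
  moreover have "arc_width a \<le> 2*a"
  proof -
    have "sin a \<le> a" "sin a \<ge> 0" using a pi_gt3 by (auto intro!: sin_x_le_x sin_ge_zero)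
    hence "sin a * cos a \<le> a" using mult_left_le[of "cos a" "sin a"] by simp
    thus ?thesis unfolding arc_width_def by simp
  qed
  moreover have "arc_width a > 0" using a pi_gt3 by (intro arc_width_pos) auto
  ultimately have "1/4 / (2*a) \<le> aspect a" unfolding aspect_def by (intro frac_le) auto
  moreover have "y \<le> 1/4/(2*a)"
  proof -
    have "8*(y+1)*a \<le> 1" using a assms by (simp add: field_simps)
    thus ?thesis using a by (simp add: field_simps)
  qed
  ultimately show ?thesis using a by (intro exI[of _ a]) auto
qed

lemma aspect_angle:
  assumes "u \<ge> 0"
  shows "0 < aspect_angle u" "aspect_angle u \<le> pi/2" "aspect (aspect_angle u) = u"
proof -
  obtain a where a: "0 < a" "a \<le> pi/3" "aspect a \<ge> u" using aspect_unbounded[OF assms] by blast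
  have "\<exists>w. a \<le> w \<and> w \<le> pi/2 \<and> aspect w = u"
    using a assms pi_gt3 by (intro IVT2) (auto simp: aspect_pi_half intro!: isCont_aspect)
  then obtain w where "a \<le> w" and w: "w \<le> pi/2" "aspect w = u" by blast
  with a have "0 < w" by linarith
  have "0 < aspect_angle u \<and> aspect_angle u \<le> pi/2 \<and> aspect (aspect_angle u) = u"
    unfolding aspect_angle_def
  proof (rule theI[of _ w])
    fix x assume "0 < x \<and> x \<le> pi/2 \<and> aspect x = u"
    thus "x = w" using aspect_inj[of x w] w \<open>0 < w\<close> by simp
  qed (use w \<open>0 < w\<close> in simp)
  thus "0 < aspect_angle u" "aspect_angle u \<le> pi/2" "aspect (aspect_angle u) = u" by auto
qed

lemma aspect_angle_aspect: assumes "0 < w" "w \<le> pi/2" shows "aspect_angle (aspect w) = w"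
proof -
  have "aspect w \<ge> 0" using arc_width_pos[OF assms] unfolding aspect_def by simp
  thus ?thesis using aspect_angle[of "aspect w"] aspect_inj[of "aspect_angle (aspect w)" w] assms by simp
qed

lemma aspect_angle_less: assumes "u > 0" shows "aspect_angle u < pi/2"
proof -
  have "aspect_angle u \<noteq> pi/2"
  proof
    assume h: "aspect_angle u = pi/2"
    have "aspect (aspect_angle u) = u" using aspect_angle(3) assms by simp
    from this[unfolded h aspect_pi_half] show False using assms by simp
  qed
  thus ?thesis using aspect_angle(2)[of u] assms by simp
qed

lemma continuous_on_aspect_angle: "continuous_on {0..} aspect_angle"
proof (clarsimp simp: continuous_on_eq_continuous_within)
  fix y0 :: real assume y0: "0 \<le> y0"
  obtain a where a: "0 < a" "a \<le> pi/3" "aspect a \<ge> y0 + 1" using aspect_unbounded[of "y0+1"] y0 by auto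
  have "continuous_on {a..pi/2} aspect"
    using a by (intro continuous_at_imp_continuous_on) (auto intro!: isCont_aspect)
  moreover have "\<forall>w\<in>{a..pi/2}. aspect_angle (aspect w) = w" using a by (auto intro!: aspect_angle_aspect)
  ultimately have "continuous_on (aspect ` {a..pi/2}) aspect_angle"
    by (rule continuous_on_inv[OF _ compact_Icc])
  moreover have "{0..aspect a} \<subseteq> aspect ` {a..pi/2}"
  proof
    fix y assume y: "y \<in> {0..aspect a}"
    have w: "0 < aspect_angle y" "aspect_angle y \<le> pi/2" "aspect (aspect_angle y) = y"
      using aspect_angle[of y] y by auto
    have "aspect_angle y \<ge> a"
    proof (rule ccontr)
      assume "\<not> a \<le> aspect_angle y"
      hence "aspect a < y" using aspect_strict_antimono[of "aspect_angle y" a] w a pi_gt3 by simp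
      thus False using y by simp
    qed
    thus "y \<in> aspect ` {a..pi/2}" using w by (metis atLeastAtMost_iff image_eqI)
  qed
  ultimately have "continuous_on {0..aspect a} aspect_angle" by (rule continuous_on_subset)
  hence "continuous (at y0 within {0..aspect a}) aspect_angle"
    using y0 a by (simp add: continuous_on_eq_continuous_within)
  moreover have "at y0 within {0..} = at y0 within {0..aspect a}"
    by (rule at_within_nhd[of _ "{..<aspect a}"]) (use y0 a in auto)
  ultimately show "continuous (at y0 within {0..}) aspect_angle" by simp
qed

lemma has_real_derivative_aspect:
  assumes "0 < w" "w \<le> pi/2"
  shows "DERIV aspect w :> - 2 * cos w * (w * sin w + cos w) / (arc_width w)\<^sup>2"
proof -
  have "w + sin w * cos w \<noteq> 0" using arc_width_pos[OF assms] unfolding arc_width_def by simp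
  hence "DERIV (\<lambda>w. (cos w)\<^sup>2 / (w + sin w * cos w)) w :>
     ((2 * cos w * (- sin w)) * (w + sin w * cos w) - (cos w)\<^sup>2 * (1 + (cos w * cos w - sin w * sin w)))
       / (w + sin w * cos w)\<^sup>2"
    by (auto intro!: derivative_eq_intros simp: power2_eq_square)
  moreover have "(2 * cos w * (- sin w)) * (w + sin w * cos w)
      - (cos w)\<^sup>2 * (1 + (cos w * cos w - sin w * sin w)) = - 2 * cos w * (w * sin w + cos w)"
  proof -
    have "sin w * sin w = 1 - cos w * cos w" using sin_cos_squared_add[of w] by (simp add: power2_eq_square)
    thus ?thesis unfolding power2_eq_square by algebra
  qed
  ultimately show ?thesis unfolding aspect_def[abs_def] arc_width_def by simp
qed

text \<open>The squared length of that arc divided by four times its width.\<close>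

definition arc_length_coeff :: "real \<Rightarrow> real" where
  "arc_length_coeff w = w\<^sup>2 / arc_width w"

lemma has_real_derivative_arc_length_coeff:
  assumes "0 < w" "w \<le> pi/2"
  shows "DERIV arc_length_coeff w :> 2 * w * sin w * (w * sin w + cos w) / (arc_width w)\<^sup>2"
proof -
  have "w + sin w * cos w \<noteq> 0" using arc_width_pos[OF assms] unfolding arc_width_def by simp
  hence "DERIV (\<lambda>w. w\<^sup>2 / (w + sin w * cos w)) w :>
     ((2 * w) * (w + sin w * cos w) - w\<^sup>2 * (1 + (cos w * cos w - sin w * sin w)))
       / (w + sin w * cos w)\<^sup>2"
    by (auto intro!: derivative_eq_intros simp: power2_eq_square)
  moreover have "(2 * w) * (w + sin w * cos w) - w\<^sup>2 * (1 + (cos w * cos w - sin w * sin w))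
      = 2 * w * sin w * (w * sin w + cos w)"
  proof -
    have "sin w * sin w = 1 - cos w * cos w" using sin_cos_squared_add[of w] by (simp add: power2_eq_square)
    thus ?thesis unfolding power2_eq_square by algebra
  qed
  ultimately show ?thesis unfolding arc_length_coeff_def[abs_def] arc_width_def by simp
qed

lemma has_real_derivative_arc_length_coeff_aspect_angle:
  assumes "u > 0"
  defines "w \<equiv> aspect_angle u"
  shows "DERIV (\<lambda>u. arc_length_coeff (aspect_angle u)) u :> - w * sin w / cos w"
proof -
  have w: "0 < w" "w < pi/2" "aspect w = u"
    using aspect_angle[of u] aspect_angle_less[of u] assms unfolding w_def by auto
  have c: "cos w > 0" and "sin w \<ge> 0" using w by (auto intro!: cos_gt_zero sin_ge_zero)
  hence pos: "w * sin w + cos w > 0" using w by (simp add: add_nonneg_pos)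
  have D: "arc_width w > 0" using arc_width_pos w by simp
  define A' where "A' = - 2 * cos w * (w * sin w + cos w) / (arc_width w)\<^sup>2"
  have "continuous_on {0<..} aspect_angle"
    using continuous_on_aspect_angle by (rule continuous_on_subset) auto
  hence "isCont aspect_angle u" using assms by (simp add: continuous_on_eq_continuous_at)
  moreover have "DERIV aspect (aspect_angle u) :> A'"
    unfolding A'_def w_def using w has_real_derivative_aspect[of w] unfolding w_def by simp
  moreover have "A' \<noteq> 0" unfolding A'_def using pos D c by simp
  moreover have "\<And>y. 0 < y \<Longrightarrow> y < u + 1 \<Longrightarrow> aspect (aspect_angle y) = y"
    using aspect_angle(3) by simp
  ultimately have "DERIV aspect_angle u :> inverse A'"
    using assms by (intro DERIV_inverse_function[where a=0 and b="u+1"]) auto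
  from DERIV_chain2[OF has_real_derivative_arc_length_coeff this]
  have "DERIV (\<lambda>u. arc_length_coeff (aspect_angle u)) u :>
      2 * w * sin w * (w * sin w + cos w) / (arc_width w)\<^sup>2 * inverse A'"
    using w unfolding w_def by simp
  moreover have "2 * w * sin w * (w * sin w + cos w) / (arc_width w)\<^sup>2 * inverse A' = - w * sin w / cos w"
    unfolding A'_def using pos D c by (simp add: divide_simps)
  ultimately show ?thesis by simp
qed

lemma arc_length_coeff_bounds:
  assumes "0 < w" "w \<le> pi/2" shows "0 \<le> arc_length_coeff w" "arc_length_coeff w \<le> pi/2"
proof -
  have D: "arc_width w > 0" using arc_width_pos[OF assms] .
  have "sin w \<ge> 0" "cos w \<ge> 0" using assms by (auto intro!: sin_ge_zero cos_ge_zero)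
  hence "w / arc_width w \<le> 1" using D unfolding arc_width_def by simp
  hence "arc_length_coeff w \<le> w * 1"
    unfolding arc_length_coeff_def power2_eq_square using assms
    by (metis mult_left_mono less_imp_le times_divide_eq_right)
  thus "arc_length_coeff w \<le> pi/2" using assms by simp
  show "0 \<le> arc_length_coeff w" unfolding arc_length_coeff_def using D by simp
qed

lemma continuous_on_arc_length_coeff: "continuous_on {0<..pi/2} arc_length_coeff"
  using arc_width_pos unfolding arc_length_coeff_def arc_width_def
  by (intro continuous_on_divide continuous_intros) fastforce

text \<open>The length of the cycloid arc from p that meets the vertical line through b
  orthogonally, at its apex.\<close>

definition line_calibration :: "real \<Rightarrow> real \<times> real \<Rightarrow> real" where
  "line_calibration b p =
     2 * sqrt ((b - fst p) * arc_length_coeff (aspect_angle (snd p / (b - fst p))))"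

lemma has_real_derivative_line_calibration_radicand:
  assumes dX: "DERIV X t :> X'" and dV: "DERIV V t :> V'" and "X t < b" "V t > 0"
  defines "w \<equiv> aspect_angle (V t / (b - X t))"
  shows "DERIV (\<lambda>t. (b - X t) * arc_length_coeff (aspect_angle (V t / (b - X t)))) t :>
           - w * (X' + sin w / cos w * V')"
proof -
  define r where "r = b - X t"
  define c where "c = cos w"
  define s where "s = sin w"
  have r: "r > 0" using assms unfolding r_def by simp
  have u: "V t / (b - X t) > 0" using assms r unfolding r_def by simp
  have w: "0 < w" "w < pi/2" "aspect w = V t / r"
    using aspect_angle(1,3)[of "V t / (b - X t)"] aspect_angle_less[OF u] u unfolding w_def r_def by auto
  have c: "c > 0" unfolding c_def using w by (intro cos_gt_zero) auto
  have D: "arc_width w > 0" using arc_width_pos w by simp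
  have ratio: "V t / r = c\<^sup>2 / arc_width w" using w(3) unfolding aspect_def c_def by simp
  define U' where "U' = (V' * r + V t * X') / r\<^sup>2"
  have "DERIV (\<lambda>t. V t / (b - X t)) t :> U'"
    unfolding U'_def r_def using dX dV assms by (auto intro!: derivative_eq_intros simp: power2_eq_square)
  from DERIV_chain2[OF has_real_derivative_arc_length_coeff_aspect_angle[OF u] this]
  have "DERIV (\<lambda>t. arc_length_coeff (aspect_angle (V t / (b - X t)))) t :> - w * s / c * U'"
    unfolding w_def r_def s_def c_def by simp
  hence "DERIV (\<lambda>t. (b - X t) * arc_length_coeff (aspect_angle (V t / (b - X t)))) t :>
      - X' * arc_length_coeff w + r * (- w * s / c * U')"
    using dX unfolding w_def r_def by (auto intro!: derivative_eq_intros)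
  moreover have "- X' * arc_length_coeff w + r * (- w * s / c * U') = - w * (X' + s / c * V')"
  proof -
    have "- X' * arc_length_coeff w + r * (- w * s / c * U')
        = - X' * w\<^sup>2 / arc_width w - w * s / c * V' - w * s / c * (V t / r) * X'"
      unfolding U'_def arc_length_coeff_def using r c by (simp add: field_simps power2_eq_square)
    also have "\<dots> = - X' * w * (w + s * c) / arc_width w - w * s / c * V'"
      unfolding ratio using c D by (simp add: field_simps power2_eq_square)
    also have "w + s * c = arc_width w" unfolding arc_width_def s_def c_def ..
    finally show ?thesis using D by (simp add: algebra_simps)
  qed
  ultimately show ?thesis unfolding s_def c_def by simp
qed

lemma has_real_derivative_line_calibration:
  assumes dX: "DERIV X t :> X'" and dV: "DERIV V t :> V'" and "X t < b" "V t > 0"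
  defines "w \<equiv> aspect_angle (V t / (b - X t))"
  shows "DERIV (\<lambda>t. line_calibration b (X t, V t)) t :> - (cos w * X' + sin w * V') / sqrt (V t)"
proof -
  define R where "R = (b - X t) * arc_length_coeff w"
  have u: "V t / (b - X t) > 0" using assms by simp
  have w: "0 < w" "w < pi/2" "aspect w = V t / (b - X t)"
    using aspect_angle(1,3)[OF less_imp_le[OF u]] aspect_angle_less[OF u] unfolding w_def by auto
  have c: "cos w > 0" using w by (intro cos_gt_zero) auto
  have "b - X t = V t * arc_width w / (cos w)\<^sup>2"
    using w(3) arc_width_pos[of w] w c assms unfolding aspect_def by (simp add: field_simps)
  hence "R = V t * w\<^sup>2 / (cos w)\<^sup>2"
    using arc_width_pos[of w] w unfolding R_def arc_length_coeff_def by simp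
  hence "R = (sqrt (V t) * w / cos w)\<^sup>2" using assms by (simp add: power_divide power_mult_distrib)
  hence sqrt_R: "sqrt R = sqrt (V t) * w / cos w" using assms w c by simp
  hence "R > 0" using assms w c by (metis divide_pos_pos mult_pos_pos real_sqrt_gt_0_iff real_sqrt_gt_zero)
  from DERIV_cmult[OF DERIV_chain2[OF DERIV_real_sqrt[OF this, unfolded R_def w_def]
      has_real_derivative_line_calibration_radicand[OF assms(1-4)]], of 2]
  have "DERIV (\<lambda>t. line_calibration b (X t, V t)) t :>
      2 * (inverse (sqrt R) / 2 * (- w * (X' + sin w / cos w * V')))"
    unfolding line_calibration_def R_def w_def by simp
  moreover have "2 * (inverse (sqrt R) / 2 * (- w * (X' + sin w / cos w * V')))
      = - (cos w * X' + sin w * V') / sqrt (V t)"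
    unfolding sqrt_R using c w assms by (simp add: field_simps)
  ultimately show ?thesis by simp
qed

lemma line_calibration_bounds:
  assumes "x < b" "0 \<le> v"
  shows "0 \<le> line_calibration b (x, v)" "line_calibration b (x, v) \<le> 2 * sqrt ((b - x) * (pi/2))"
proof -
  have "v / (b - x) \<ge> 0" using assms by simp
  hence "0 < aspect_angle (v / (b - x))" "aspect_angle (v / (b - x)) \<le> pi/2"
    by (rule aspect_angle)+
  hence "0 \<le> arc_length_coeff (aspect_angle (v / (b - x)))"
      "arc_length_coeff (aspect_angle (v / (b - x))) \<le> pi/2"
    by (rule arc_length_coeff_bounds)+
  thus "0 \<le> line_calibration b (x, v)" "line_calibration b (x, v) \<le> 2 * sqrt ((b - x) * (pi/2))"
    unfolding line_calibration_def using assms by (auto intro!: mult_left_mono)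
qed

lemma continuous_on_line_calibration:
  assumes "continuous_on A g" "\<And>t. t \<in> A \<Longrightarrow> fst (g t) < b" "\<And>t. t \<in> A \<Longrightarrow> snd (g t) \<ge> 0"
  shows "continuous_on A (\<lambda>t. line_calibration b (g t))"
proof -
  let ?u = "\<lambda>t. snd (g t) / (b - fst (g t))"
  have "continuous_on A ?u" using assms by (intro continuous_intros) auto
  moreover have u: "?u t \<ge> 0" if "t \<in> A" for t using assms(2,3)[OF that] by simp
  ultimately have "continuous_on A (\<lambda>t. aspect_angle (?u t))"
    by (intro continuous_on_compose2[OF continuous_on_aspect_angle]) auto
  moreover have "(\<lambda>t. aspect_angle (?u t)) ` A \<subseteq> {0<..pi/2}"
    using aspect_angle(1,2)[OF u] by auto
  ultimately have "continuous_on A (\<lambda>t. arc_length_coeff (aspect_angle (?u t)))"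
    by (rule continuous_on_compose2[OF continuous_on_arc_length_coeff])
  thus ?thesis unfolding line_calibration_def using assms(1) by (intro continuous_intros)
qed

lemma has_real_derivative_fst:
  "(g has_vector_derivative D) (at t) \<Longrightarrow> ((\<lambda>t. fst (g t)) has_real_derivative fst D) (at t)"
  unfolding has_real_derivative_iff_has_vector_derivative has_vector_derivative_def
  by (drule has_derivative_fst) simp

lemma has_real_derivative_snd:
  "(g has_vector_derivative D) (at t) \<Longrightarrow> ((\<lambda>t. snd (g t)) has_real_derivative snd D) (at t)"
  unfolding has_real_derivative_iff_has_vector_derivative has_vector_derivative_def
  by (drule has_derivative_snd) simp

lemma has_real_derivative_line_calibration_curve:
  assumes "(g has_vector_derivative g') (at t)" "fst (g t) < b" "snd (g t) > 0"
  defines "w \<equiv> aspect_angle (snd (g t) / (b - fst (g t)))"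
  shows "((\<lambda>t. line_calibration b (g t)) has_real_derivative
           - ((cos w, sin w) \<bullet> g') / sqrt (snd (g t))) (at t)"
  using has_real_derivative_line_calibration[OF has_real_derivative_fst[OF assms(1)]
      has_real_derivative_snd[OF assms(1)] assms(2,3)]
  unfolding w_def by (simp add: inner_prod_def)

text \<open>The rate of change of the calibration along a curve is the pairing of the velocity
  with a unit vector, divided by sqrt v; by Cauchy-Schwarz it is at least minus the speed.\<close>

lemma line_calibration_drop_le_length:
  fixes g :: "real \<Rightarrow> real \<times> real"
  assumes cont: "continuous_on {0..1} g" and "finite S"
    and deriv: "\<And>t. t \<in> {0..1} - S \<Longrightarrow> (g has_vector_derivative vector_derivative g (at t)) (at t)"
    and nonneg: "\<And>t. t \<in> {0..1} \<Longrightarrow> snd (g t) \<ge> 0"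
    and "finite E" and pos: "\<And>t. t \<in> {0..1} - E \<Longrightarrow> snd (g t) > 0"
    and len: "has_H_length g L"
    and s: "0 \<le> s" "s \<le> 1" and left: "\<And>t. t \<in> {0..s} \<Longrightarrow> fst (g t) < b"
  shows "line_calibration b (g 0) - line_calibration b (g s) \<le> L"
proof -
  define f where "f t = norm (vector_derivative g (at t)) / sqrt (snd (g t))" for t
  define h where "h t = line_calibration b (g t)" for t
  define e where "e t = (cos (aspect_angle (snd (g t) / (b - fst (g t)))),
                         sin (aspect_angle (snd (g t) / (b - fst (g t)))))" for t
  define h' where "h' t = - (e t \<bullet> vector_derivative g (at t)) / sqrt (snd (g t))" for t
  have "(h' has_integral (h s - h 0)) {0..s}"
  proof (rule fundamental_theorem_of_calculus_interior_strong[where S="E \<union> S"])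
    show "continuous_on {0..s} h"
      unfolding h_def using s left nonneg
      by (intro continuous_on_line_calibration continuous_on_subset[OF cont]) auto
    fix t assume "t \<in> {0<..<s} - (E \<union> S)"
    hence "(g has_vector_derivative vector_derivative g (at t)) (at t)" "fst (g t) < b" "snd (g t) > 0"
      using deriv left pos s by auto
    thus "(h has_vector_derivative h' t) (at t)"
      unfolding h_def h'_def e_def has_real_derivative_iff_has_vector_derivative[symmetric]
      by (rule has_real_derivative_line_calibration_curve)
  qed (use \<open>finite E\<close> \<open>finite S\<close> s in simp_all)
  hence "((\<lambda>t. - h' t) has_integral (h 0 - h s)) {0..s}"
    using has_integral_neg by force
  hence "((\<lambda>t. if t \<in> E then f t else - h' t) has_integral (h 0 - h s)) {0..s}"
    by (rule has_integral_spike_finite[OF \<open>finite E\<close>, rotated]) simp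
  moreover have "(if t \<in> E then f t else - h' t) \<le> f t" if "t \<in> {0..s}" for t
  proof (cases "t \<in> E")
    case False
    have "e t \<bullet> vector_derivative g (at t) \<le> norm (e t) * norm (vector_derivative g (at t))"
      by (rule norm_cauchy_schwarz)
    also have "norm (e t) = 1" unfolding e_def by (simp add: norm_Pair)
    finally have "e t \<bullet> vector_derivative g (at t) \<le> norm (vector_derivative g (at t))" by simp
    hence "e t \<bullet> vector_derivative g (at t) / sqrt (snd (g t)) \<le> f t"
      unfolding f_def by (rule divide_right_mono) (use nonneg that s in simp)
    thus ?thesis using False unfolding h'_def by simp
  qed simp
  moreover have f: "(f has_integral L) {0..1}" using len unfolding has_H_length_def f_def[abs_def] .
  hence "f integrable_on {0..s}"
    by (rule integrable_subinterval_real[OF has_integral_integrable]) (use s in auto)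
  ultimately have "h 0 - h s \<le> integral {0..s} f"
    by (intro has_integral_le[OF _ integrable_integral]) blast+
  also have "integral {0..s} f \<le> L"
  proof (rule has_integral_subset_le[OF _ integrable_integral f])
    show "\<forall>t\<in>{0..1}. 0 \<le> f t" unfolding f_def using nonneg by simp
  qed (use s \<open>f integrable_on {0..s}\<close> in auto)
  finally show ?thesis unfolding h_def .
qed

lemma first_hitting_time:
  fixes f :: "real \<Rightarrow> real"
  assumes cont: "continuous_on {0..1} f" and "f 0 < b" "b \<le> f 1"
  obtains \<tau> where "0 < \<tau>" "\<tau> \<le> 1" "b \<le> f \<tau>" "\<And>t. 0 \<le> t \<Longrightarrow> t < \<tau> \<Longrightarrow> f t < b"
proof -
  define T where "T = {0..1} \<inter> f -` {b..}"
  have "closed T" unfolding T_def by (rule continuous_closed_preimage[OF cont]) auto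
  moreover have "1 \<in> T" unfolding T_def using assms by simp
  moreover have "bdd_below T" unfolding T_def by (rule bdd_belowI[of _ 0]) simp
  ultimately have T: "Inf T \<in> T" using closed_contains_Inf by blast
  have below: "f t < b" if "0 \<le> t" "t < Inf T" for t
  proof (rule ccontr)
    assume "\<not> f t < b"
    hence "t \<in> T" using that T unfolding T_def by auto
    hence "Inf T \<le> t" using \<open>bdd_below T\<close> by (rule cInf_lower)
    thus False using that by simp
  qed
  have "Inf T \<noteq> 0" using T \<open>f 0 < b\<close> unfolding T_def by auto
  hence "0 < Inf T" using T unfolding T_def by auto
  thus thesis using that T below unfolding T_def by auto
qed

text \<open>Stop just before the curve first reaches the line, where the calibration is close to 0.\<close>

lemma line_calibration_le_length:
  fixes g :: "real \<Rightarrow> real \<times> real"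
  assumes pc: "g piecewise_C1_differentiable_on {0..1}"
    and start: "fst (g 0) < b" and finish: "b \<le> fst (g 1)"
    and nonneg: "\<And>t. t \<in> {0..1} \<Longrightarrow> snd (g t) \<ge> 0"
    and "finite E" and pos: "\<And>t. t \<in> {0..1} - E \<Longrightarrow> snd (g t) > 0"
    and len: "has_H_length g L"
  shows "line_calibration b (g 0) \<le> L"
proof -
  obtain S where "finite S" and C1: "g C1_differentiable_on ({0..1} - S)"
    and cont: "continuous_on {0..1} g"
    using pc unfolding piecewise_C1_differentiable_on_def by blast
  have deriv: "(g has_vector_derivative vector_derivative g (at t)) (at t)" if "t \<in> {0..1} - S" for t
    using C1 that unfolding C1_differentiable_on_eq by (auto simp: vector_derivative_works)
  have cont_x: "continuous_on {0..1} (\<lambda>t. fst (g t))" using cont by (intro continuous_intros)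
  obtain \<tau> where \<tau>: "0 < \<tau>" "\<tau> \<le> 1" "b \<le> fst (g \<tau>)"
    and left: "\<And>t. 0 \<le> t \<Longrightarrow> t < \<tau> \<Longrightarrow> fst (g t) < b"
    using first_hitting_time[OF cont_x start finish] by blast
  show ?thesis
  proof (rule field_le_epsilon)
    fix e :: real assume "0 < e"
    define \<eta> where "\<eta> = e\<^sup>2 / (2 * pi)"
    have "\<eta> > 0" unfolding \<eta>_def using \<open>0 < e\<close> by simp
    then obtain \<delta> where "\<delta> > 0"
      and near: "\<And>t. t \<in> {0..1} \<Longrightarrow> dist t \<tau> < \<delta> \<Longrightarrow> dist (fst (g t)) (fst (g \<tau>)) < \<eta>"
      using cont_x \<tau> unfolding continuous_on_iff by (metis atLeastAtMost_iff less_imp_le)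
    define s where "s = max (\<tau>/2) (\<tau> - \<delta>/2)"
    have s: "0 \<le> s" "s < \<tau>" "dist s \<tau> < \<delta>"
      using \<tau> \<open>\<delta> > 0\<close> unfolding s_def dist_real_def by auto
    have "b - \<eta> < fst (g s)" "fst (g s) < b" using near[of s] s \<tau> left[of s] unfolding dist_real_def by auto
    have drop: "line_calibration b (g 0) - line_calibration b (g s) \<le> L"
      using s \<tau> left \<open>finite S\<close> \<open>finite E\<close>
      by (intro line_calibration_drop_le_length[OF cont _ deriv nonneg _ pos len]) auto
    have "line_calibration b (g s) \<le> 2 * sqrt ((b - fst (g s)) * (pi/2))"
      using line_calibration_bounds(2)[OF \<open>fst (g s) < b\<close>, of "snd (g s)"] nonneg[of s] s \<tau> by simp
    also have "\<dots> \<le> 2 * sqrt (\<eta> * (pi/2))"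
      using \<open>b - \<eta> < fst (g s)\<close> by (intro mult_left_mono real_sqrt_le_mono mult_right_mono) auto
    also have "\<dots> = e"
    proof -
      have "\<eta> * (pi/2) = (e/2)\<^sup>2" unfolding \<eta>_def by (simp add: field_simps power2_eq_square)
      thus ?thesis using \<open>0 < e\<close> by simp
    qed
    finally show "line_calibration b (g 0) \<le> L + e" using drop by simp
  qed
qed

lemma cos_eq_one_cases: assumes "cos x = 1" "0 \<le> x" "x < 4*pi" shows "x = 0 \<or> x = 2*pi"
proof -
  obtain n :: int where n: "x = real_of_int n * 2 * pi" using assms(1) unfolding cos_one_2pi_int by blast
  have "0 \<le> real_of_int n * (2*pi)" "real_of_int n * (2*pi) < 2 * (2*pi)" using n assms by simp_all
  hence "0 \<le> n" "n < 2" using pi_gt_zero by (simp_all add: zero_le_mult_iff)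
  hence "n = 0 \<or> n = 1" by auto
  thus ?thesis using n by auto
qed

lemma cos_less_one: assumes "0 < x" "x < 2*pi" shows "cos x < 1"
proof -
  have "cos x \<noteq> 1" using cos_eq_one_cases[of x] assms by auto
  thus ?thesis using cos_le_one[of x] by linarith
qed

definition cycloid :: "real \<Rightarrow> real \<Rightarrow> real \<Rightarrow> real \<Rightarrow> real \<times> real" where
  "cycloid a th p t =
     (a * ((p + th * t) - sin (p + th * t)) - a * (p - sin p), a * (1 - cos (p + th * t)))"

lemma has_vector_derivative_cycloid:
  "(cycloid a th p has_vector_derivative
     (a * th * (1 - cos (p + th * t)), a * th * sin (p + th * t))) (at t)"
proof -
  have "((\<lambda>t. a * ((p + th * t) - sin (p + th * t)) - a * (p - sin p)) has_real_derivative
      a * th * (1 - cos (p + th * t))) (at t)"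
    by (auto intro!: derivative_eq_intros simp: algebra_simps)
  moreover have "((\<lambda>t. a * (1 - cos (p + th * t))) has_real_derivative a * th * sin (p + th * t)) (at t)"
    by (auto intro!: derivative_eq_intros simp: algebra_simps)
  ultimately show ?thesis unfolding cycloid_def[abs_def]
    by (intro has_vector_derivative_Pair) (auto simp: has_real_derivative_iff_has_vector_derivative)
qed

lemma cycloid_piecewise_C1: "cycloid a th p piecewise_C1_differentiable_on {0..1}"
proof (rule C1_differentiable_imp_piecewise)
  show "cycloid a th p C1_differentiable_on {0..1}" unfolding C1_differentiable_on_def
    by (intro exI[of _ "\<lambda>t. (a * th * (1 - cos (p + th * t)), a * th * sin (p + th * t))"]
        conjI ballI has_vector_derivative_cycloid continuous_intros)
qed

lemma cycloid_H_speed: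
  assumes "a > 0" "th > 0" "cos (p + th * t) < 1"
  shows "norm (vector_derivative (cycloid a th p) (at t)) / sqrt (snd (cycloid a th p t))
    = th * sqrt (2 * a)"
proof -
  define q where "q = 1 - cos (p + th * t)"
  have "q > 0" using assms unfolding q_def by simp
  have "q\<^sup>2 + (sin (p + th * t))\<^sup>2 = 2 * q"
    unfolding q_def using sin_cos_squared_add[of "p + th * t"] by (simp add: power2_eq_square algebra_simps)
  hence "(a * th * q)\<^sup>2 + (a * th * sin (p + th * t))\<^sup>2 = (a * th)\<^sup>2 * (2 * q)"
    by (metis distrib_left power_mult_distrib)
  hence "norm (vector_derivative (cycloid a th p) (at t)) = a * th * (sqrt 2 * sqrt q)"
    using assms unfolding vector_derivative_at[OF has_vector_derivative_cycloid] q_def[symmetric]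
    by (simp add: norm_Pair real_sqrt_mult)
  moreover have "sqrt (snd (cycloid a th p t)) = sqrt a * sqrt q"
    unfolding cycloid_def q_def[symmetric] by (simp add: real_sqrt_mult)
  moreover have "a * th * (sqrt 2 * sqrt q) / (sqrt a * sqrt q) = th * (sqrt 2 * sqrt a)"
    using assms \<open>q > 0\<close> real_sqrt_mult_self[of a] by (simp add: field_simps)
  ultimately show ?thesis by (simp add: real_sqrt_mult)
qed

lemma finite_cycloid_cusps:
  assumes "0 < th" "th \<le> pi" "0 \<le> p" "p < 2*pi"
  shows "finite {t \<in> {0..1}. cos (p + th * t) = 1}"
proof (rule finite_subset)
  show "{t \<in> {0..1}. cos (p + th * t) = 1} \<subseteq> {- p / th, (2*pi - p) / th}"
  proof
    fix t assume t: "t \<in> {t \<in> {0..1}. cos (p + th * t) = 1}"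
    have "th * t \<le> th" "0 \<le> th * t" using t assms by (simp_all add: mult_left_le)
    hence "0 \<le> p + th * t" "p + th * t < 4*pi" using assms by linarith+
    hence "p + th * t = 0 \<or> p + th * t = 2*pi" using cos_eq_one_cases t by simp
    thus "t \<in> {- p / th, (2*pi - p) / th}" using assms by (auto simp: field_simps)
  qed
qed simp

lemma has_H_length_cycloid:
  assumes "a > 0" "0 < th" "th \<le> pi" "0 \<le> p" "p < 2*pi"
  shows "has_H_length (cycloid a th p) (th * sqrt (2 * a))"
  unfolding has_H_length_def
proof (rule has_integral_spike_finite[OF finite_cycloid_cusps[OF assms(2-)]])
  show "((\<lambda>t::real. th * sqrt (2 * a)) has_integral th * sqrt (2 * a)) {0..1}"
    using has_integral_const_real[of "th * sqrt (2 * a)" 0 1] by (simp add: o_def)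
  fix t assume "t \<in> {0..1} - {t \<in> {0..1}. cos (p + th * t) = 1}"
  hence "cos (p + th * t) \<noteq> 1" by simp
  hence "cos (p + th * t) < 1" using cos_le_one[of "p + th * t"] by linarith
  thus "norm (vector_derivative (cycloid a th p) (at t)) / sqrt (snd (cycloid a th p t)) = th * sqrt (2 * a)"
    using cycloid_H_speed assms by simp
qed

lemma sin_less_self: fixes x :: real assumes "0 < x" shows "sin x < x"
proof (cases "x < 2*pi")
  case True
  have "(\<lambda>x. x - sin x) 0 < (\<lambda>x. x - sin x) x"
  proof (rule DERIV_pos_imp_increasing_open[OF assms])
    fix y assume "0 < y" "y < x"
    hence "0 < 1 - cos y" using cos_less_one True by simp
    moreover have "DERIV (\<lambda>x. x - sin x) y :> 1 - cos y" by (auto intro!: derivative_eq_intros)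
    ultimately show "\<exists>z. DERIV (\<lambda>x. x - sin x) y :> z \<and> 0 < z" by blast
  qed (intro continuous_intros)
  thus ?thesis by simp
next
  case False
  thus ?thesis using sin_le_one[of x] pi_gt3 by linarith
qed

lemma one_minus_half_sq_le_cos: fixes x :: real assumes "0 \<le> x" shows "1 - x\<^sup>2/2 \<le> cos x"
proof -
  have "(\<lambda>x. cos x - 1 + x\<^sup>2/2) 0 \<le> (\<lambda>x. cos x - 1 + x\<^sup>2/2) x"
  proof (rule DERIV_nonneg_imp_nondecreasing[OF assms])
    fix y assume "0 \<le> y" "y \<le> x"
    hence "0 \<le> - sin y + y" using sin_x_le_x by simp
    moreover have "DERIV (\<lambda>x. cos x - 1 + x\<^sup>2/2) y :> - sin y + y" by (auto intro!: derivative_eq_intros)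
    ultimately show "\<exists>z. DERIV (\<lambda>x. cos x - 1 + x\<^sup>2/2) y :> z \<and> 0 \<le> z" by blast
  qed
  thus ?thesis by simp
qed

lemma x_minus_cube_le_sin: fixes x :: real assumes "0 \<le> x" shows "x - x^3/6 \<le> sin x"
proof -
  have "(\<lambda>x. sin x - x + x^3/6) 0 \<le> (\<lambda>x. sin x - x + x^3/6) x"
  proof (rule DERIV_nonneg_imp_nondecreasing[OF assms])
    fix y assume "0 \<le> y" "y \<le> x"
    hence "0 \<le> cos y - 1 + y\<^sup>2/2" using one_minus_half_sq_le_cos[of y] by simp
    moreover have "DERIV (\<lambda>x. sin x - x + x^3/6) y :> cos y - 1 + y\<^sup>2/2"
      by (auto intro!: derivative_eq_intros simp: power2_eq_square)
    ultimately show "\<exists>z. DERIV (\<lambda>x. sin x - x + x^3/6) y :> z \<and> 0 \<le> z" by blast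
  qed
  thus ?thesis by simp
qed

lemma cos_le_taylor4: fixes x :: real assumes "0 \<le> x" shows "cos x \<le> 1 - x\<^sup>2/2 + x^4/24"
proof -
  have "(\<lambda>x. 1 - x\<^sup>2/2 + x^4/24 - cos x) 0 \<le> (\<lambda>x. 1 - x\<^sup>2/2 + x^4/24 - cos x) x"
  proof (rule DERIV_nonneg_imp_nondecreasing[OF assms])
    fix y assume "0 \<le> y" "y \<le> x"
    hence "0 \<le> sin y - y + y^3/6" using x_minus_cube_le_sin[of y] by simp
    moreover have "DERIV (\<lambda>x. 1 - x\<^sup>2/2 + x^4/24 - cos x) y :> sin y - y + y^3/6"
      by (auto intro!: derivative_eq_intros simp: power2_eq_square power3_eq_cube)
    ultimately show "\<exists>z. DERIV (\<lambda>x. 1 - x\<^sup>2/2 + x^4/24 - cos x) y :> z \<and> 0 \<le> z" by blast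
  qed
  thus ?thesis by simp
qed

lemma x_cos_le_sin: fixes x :: real assumes "0 \<le> x" "x \<le> pi" shows "x * cos x \<le> sin x"
proof -
  have "(\<lambda>x. sin x - x * cos x) 0 \<le> (\<lambda>x. sin x - x * cos x) x"
  proof (rule DERIV_nonneg_imp_nondecreasing[OF assms(1)])
    fix y assume "0 \<le> y" "y \<le> x"
    hence "0 \<le> y * sin y" using assms by (auto intro!: mult_nonneg_nonneg sin_ge_zero)
    moreover have "DERIV (\<lambda>x. sin x - x * cos x) y :> y * sin y" by (auto intro!: derivative_eq_intros)
    ultimately show "\<exists>z. DERIV (\<lambda>x. sin x - x * cos x) y :> z \<and> 0 \<le> z" by blast
  qed
  thus ?thesis by simp
qed

lemma x_sin_le_two_minus_two_cos: fixes x :: real assumes "0 \<le> x" "x \<le> pi"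
  shows "x * sin x \<le> 2 - 2 * cos x"
proof -
  have "(\<lambda>x. 2 - 2 * cos x - x * sin x) 0 \<le> (\<lambda>x. 2 - 2 * cos x - x * sin x) x"
  proof (rule DERIV_nonneg_imp_nondecreasing[OF assms(1)])
    fix y assume "0 \<le> y" "y \<le> x"
    hence "0 \<le> sin y - y * cos y" using x_cos_le_sin assms by simp
    moreover have "DERIV (\<lambda>x. 2 - 2 * cos x - x * sin x) y :> sin y - y * cos y"
      by (auto intro!: derivative_eq_intros)
    ultimately show "\<exists>z. DERIV (\<lambda>x. 2 - 2 * cos x - x * sin x) y :> z \<and> 0 \<le> z" by blast
  qed
  thus ?thesis by simp
qed

text \<open>If sin x > x/2, then x < 2 and the Taylor bounds give a first summand of at least
  -x^4/12 against a second one of at least x^4/9.\<close>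

lemma half_x_minus_sin_estimate: fixes x :: real assumes "0 < x" "x \<le> pi"
  shows "0 < (x/2 - sin x) * (x - sin x) + (1 - cos x)\<^sup>2"
proof (cases "sin x \<le> x/2")
  case True
  have "0 \<le> (x/2 - sin x) * (x - sin x)" using True sin_x_le_x[of x] assms by simp
  moreover have "cos x < 1" using cos_less_one[of x] assms pi_gt3 by simp
  ultimately show ?thesis by (simp add: add_nonneg_pos)
next
  case False
  hence "x < 2" using sin_le_one[of x] by linarith
  have e: "0 \<le> x - sin x" "x - sin x \<le> x^3/6" and f: "- (x/2) \<le> x/2 - sin x"
    using sin_x_le_x[of x] x_minus_cube_le_sin[of x] assms by simp_all
  have "- (x/2) * (x^3/6) \<le> - (x/2) * (x - sin x)"
    using e assms by (intro mult_left_mono_neg) auto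
  also have "\<dots> \<le> (x/2 - sin x) * (x - sin x)" using e f by (intro mult_right_mono) auto
  finally have A: "- (x^4/12) \<le> (x/2 - sin x) * (x - sin x)"
    by (simp add: power3_eq_cube power4_eq_xxxx)
  have "x\<^sup>2 \<le> 2\<^sup>2" using \<open>x < 2\<close> assms by (intro power_mono) auto
  hence "x\<^sup>2 * x\<^sup>2 \<le> x\<^sup>2 * 4" by (intro mult_left_mono) auto
  hence "x^4/24 \<le> x\<^sup>2/6" by (simp add: power4_eq_xxxx power2_eq_square)
  hence "x\<^sup>2/3 \<le> 1 - cos x" using cos_le_taylor4[of x] assms by simp
  hence "(x\<^sup>2/3)\<^sup>2 \<le> (1 - cos x)\<^sup>2" using assms by (intro power_mono) auto
  hence "x^4/9 \<le> (1 - cos x)\<^sup>2" by (simp add: power4_eq_xxxx power2_eq_square)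
  moreover have "x^4/12 < x^4/9" using assms by simp
  ultimately show ?thesis using A by linarith
qed

text \<open>The smaller root m of e^2 m^2 - 2 (y e + q^2) m + (y^2 + q^2) = 0, i.e. the
  radius for which the point (1 - 1/m, (y/m - e)/q) lies on the unit circle.\<close>

lemma smaller_root_on_unit_circle:
  fixes e q y :: real
  assumes "e > 0" "q > 0" and B: "y * e + q\<^sup>2 > 0" and disc: "2 * y * e + q\<^sup>2 - e\<^sup>2 \<ge> 0"
  defines "m \<equiv> (y * e + q\<^sup>2 - q * sqrt (2 * y * e + q\<^sup>2 - e\<^sup>2)) / e\<^sup>2"
  shows "m > 0" "(1 - 1/m)\<^sup>2 + ((y/m - e) / q)\<^sup>2 = 1"
proof -
  define r where "r = sqrt (2 * y * e + q\<^sup>2 - e\<^sup>2)"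
  have r: "r \<ge> 0" "r\<^sup>2 = 2 * y * e + q\<^sup>2 - e\<^sup>2" using disc unfolding r_def by auto
  have ident: "(y * e + q\<^sup>2)\<^sup>2 - (q * r)\<^sup>2 = e\<^sup>2 * (y\<^sup>2 + q\<^sup>2)"
    unfolding power_mult_distrib r(2) by (simp add: power2_eq_square algebra_simps)
  moreover have "e\<^sup>2 * (y\<^sup>2 + q\<^sup>2) > 0" using assms by (simp add: add_nonneg_pos)
  ultimately have "(q * r)\<^sup>2 < (y * e + q\<^sup>2)\<^sup>2" by linarith
  hence "q * r < y * e + q\<^sup>2" using B by (simp add: power2_less_imp_less)
  thus "m > 0" unfolding m_def r_def[symmetric] using assms by simp
  have em: "e\<^sup>2 * m = y * e + q\<^sup>2 - q * r" unfolding m_def r_def using \<open>e > 0\<close> by simp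
  have "m * (y * e + q\<^sup>2 + q * r) = (y\<^sup>2 + q\<^sup>2)"
  proof -
    have "e\<^sup>2 * (m * (y * e + q\<^sup>2 + q * r)) = (y * e + q\<^sup>2)\<^sup>2 - (q * r)\<^sup>2"
      unfolding mult.assoc[symmetric] em by (simp add: power2_eq_square algebra_simps)
    thus ?thesis using ident \<open>e > 0\<close> by simp
  qed
  moreover have "e\<^sup>2 * m\<^sup>2 = m * (y * e + q\<^sup>2 - q * r)"
    unfolding em[symmetric] by (simp add: power2_eq_square)
  ultimately have quad: "e\<^sup>2 * m\<^sup>2 - 2 * m * (y * e + q\<^sup>2) + (y\<^sup>2 + q\<^sup>2) = 0"
    by (simp add: algebra_simps)
  have "(m * q)\<^sup>2 * ((1 - 1/m)\<^sup>2 + ((y/m - e) / q)\<^sup>2) = q\<^sup>2 * (m - 1)\<^sup>2 + (y - e * m)\<^sup>2"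
    using \<open>m > 0\<close> \<open>q > 0\<close> by (simp add: field_simps power2_eq_square)
  also have "\<dots> = (m * q)\<^sup>2" using quad by (simp add: power2_eq_square algebra_simps)
  finally show "(1 - 1/m)\<^sup>2 + ((y/m - e) / q)\<^sup>2 = 1" using \<open>m > 0\<close> \<open>q > 0\<close> by simp
qed

lemma Lambda_eq_smaller_root:
  assumes "0 < th" "th \<le> pi" "th / 2 \<le> b"
  defines "e \<equiv> th - sin th" and "q \<equiv> 1 - cos th" and "y \<equiv> b - sin th"
  shows "e > 0" "q > 0" "y * e + q\<^sup>2 > 0" "2 * y * e + q\<^sup>2 - e\<^sup>2 \<ge> 0"
    and "Lambda b th = th\<^sup>2 * ((y * e + q\<^sup>2 - q * sqrt (2 * y * e + q\<^sup>2 - e\<^sup>2)) / e\<^sup>2)"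
proof -
  have sc: "(sin th)\<^sup>2 + (cos th)\<^sup>2 = 1" by simp
  show "e > 0" unfolding e_def using sin_less_self[OF assms(1)] by simp
  show "q > 0" unfolding q_def using cos_less_one[of th] assms pi_gt3 by simp
  have "(th/2 - sin th) * e \<le> y * e" unfolding y_def using assms \<open>e > 0\<close> by simp
  moreover have "y * e + q\<^sup>2 = y * e + (1 - cos th)\<^sup>2" unfolding q_def ..
  ultimately show "y * e + q\<^sup>2 > 0"
    using half_x_minus_sin_estimate[OF assms(1,2)] unfolding e_def by linarith
  have disc: "2 * y * e + q\<^sup>2 - e\<^sup>2 = 2 * (th - sin th) * b + 2 * (1 - cos th) - th\<^sup>2"
    unfolding y_def e_def q_def using sc by (simp add: power2_eq_square algebra_simps)
  have "th * sin th \<le> 2 - 2 * cos th" using x_sin_le_two_minus_two_cos assms by simp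
  moreover have "e * th \<le> e * (2 * b)" using \<open>e > 0\<close> assms by (intro mult_left_mono) auto
  ultimately show "2 * y * e + q\<^sup>2 - e\<^sup>2 \<ge> 0" unfolding disc unfolding e_def
    by (simp add: power2_eq_square algebra_simps)
  have "y * e + q\<^sup>2 = (th - sin th) * b + 2 * (1 - cos th) - th * sin th"
    unfolding y_def e_def q_def using sc by (simp add: power2_eq_square algebra_simps)
  thus "Lambda b th = th\<^sup>2 * ((y * e + q\<^sup>2 - q * sqrt (2 * y * e + q\<^sup>2 - e\<^sup>2)) / e\<^sup>2)"
    unfolding Lambda_def disc unfolding e_def q_def by simp
qed

text \<open>Lambda(b, th) is half the squared length of a cycloid arc of angle th from (0,1)
  to the line x = b.\<close>

lemma half_sq_line_calibration_le_Lambda: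
  assumes "0 < th" "th \<le> pi" "th / 2 \<le> b"
  shows "(line_calibration b (0, 1))\<^sup>2 / 2 \<le> Lambda b th"
proof -
  define e where "e = th - sin th"
  define q where "q = 1 - cos th"
  define y where "y = b - sin th"
  define m where "m = (y * e + q\<^sup>2 - q * sqrt (2 * y * e + q\<^sup>2 - e\<^sup>2)) / e\<^sup>2"
  note facts = Lambda_eq_smaller_root[OF assms, folded e_def q_def y_def, folded m_def]
  have "m > 0" and circle: "(1 - 1/m)\<^sup>2 + ((y/m - e) / q)\<^sup>2 = 1"
    using smaller_root_on_unit_circle[OF facts(1-4)] unfolding m_def by auto
  obtain p where p: "0 \<le> p" "p < 2*pi" "cos p = 1 - 1/m" "sin p = (y/m - e) / q"
    using sincos_total_2pi[OF circle] by metis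
  define g where "g = cycloid m th p"
  have "g 0 = (0, 1)" unfolding g_def cycloid_def using p \<open>m > 0\<close> by simp
  have "fst (g 1) = m * (th + sin p * q - cos p * sin th)"
    unfolding g_def cycloid_def q_def by (simp add: sin_add algebra_simps)
  also have "\<dots> = b"
    unfolding p using \<open>m > 0\<close> facts(2) unfolding y_def e_def by (simp add: field_simps)
  finally have "fst (g 1) = b" .
  have "line_calibration b (g 0) \<le> th * sqrt (2 * m)"
  proof (rule line_calibration_le_length[OF _ _ _ _ finite_cycloid_cusps[OF assms(1,2) p(1,2)]])
    show "g piecewise_C1_differentiable_on {0..1}" unfolding g_def by (rule cycloid_piecewise_C1)
    show "fst (g 0) < b" "b \<le> fst (g 1)" using \<open>g 0 = (0, 1)\<close> \<open>fst (g 1) = b\<close> assms by auto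
    show "has_H_length g (th * sqrt (2 * m))"
      unfolding g_def using has_H_length_cycloid \<open>m > 0\<close> assms p by simp
    fix t
    show "0 \<le> snd (g t)" unfolding g_def cycloid_def using \<open>m > 0\<close> by simp
    assume "t \<in> {0..1} - {t \<in> {0..1}. cos (p + th * t) = 1}"
    hence "cos (p + th * t) < 1" using cos_le_one[of "p + th * t"] by (auto simp: less_le)
    thus "0 < snd (g t)" unfolding g_def cycloid_def using \<open>m > 0\<close> by simp
  qed
  moreover have "0 \<le> line_calibration b (0, 1)" using line_calibration_bounds(1)[of 0 b 1] assms by simp
  ultimately have "(line_calibration b (0, 1))\<^sup>2 \<le> (th * sqrt (2 * m))\<^sup>2"
    using \<open>g 0 = (0, 1)\<close> by (intro power_mono) auto
  moreover have "(th * sqrt (2 * m))\<^sup>2 = 2 * (th\<^sup>2 * m)" using \<open>m > 0\<close> by (simp add: power_mult_distrib)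
  moreover have "Lambda b th = th\<^sup>2 * m" using facts(5) unfolding m_def .
  ultimately show ?thesis by simp
qed

lemma segment_has_H_length:
  assumes "v \<ge> 0"
  shows "\<exists>g L. admissible_curve g (0, 1) (b, v) \<and> has_H_length g L"
proof -
  define g where "g t = (b * t, 1 + (v - 1) * t)" for t :: real
  have height: "1 + (v - 1) * t = (1 - t) + v * t" for t by (simp add: algebra_simps)
  have deriv: "(g has_vector_derivative (b, v - 1)) (at t)" for t
    unfolding g_def[abs_def]
    by (intro has_vector_derivative_Pair) (auto intro!: derivative_eq_intros simp: has_real_derivative_iff_has_vector_derivative[symmetric])
  have "g C1_differentiable_on {0..1}" unfolding C1_differentiable_on_def
    by (intro exI[of _ "\<lambda>t. (b, v - 1)"] conjI ballI deriv continuous_intros)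
  moreover have "snd (g t) > 0" if "t \<in> {0<..<1}" for t
    unfolding g_def height using that assms by (simp add: add_pos_nonneg)
  ultimately have "admissible_curve g (0, 1) (b, v)"
    unfolding admissible_curve_def g_def by (auto intro: C1_differentiable_imp_piecewise)
  moreover obtain L where "((\<lambda>t. norm (b, v - 1) / sqrt (1 + (v - 1) * t)) has_integral L) {0..1}"
  proof (cases "v = 1")
    case True
    thus thesis using that has_integral_const_real[of "norm (b, v - 1)" 0 1] by (simp add: o_def)
  next
    case False
    define F where "F t = 2 * norm (b, v - 1) * sqrt (1 + (v - 1) * t) / (v - 1)" for t
    have "((\<lambda>t. norm (b, v - 1) / sqrt (1 + (v - 1) * t)) has_integral (F 1 - F 0)) {0..1}"
    proof (rule fundamental_theorem_of_calculus_interior)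
      show "continuous_on {0..1} F" unfolding F_def[abs_def] using False assms
        by (intro continuous_intros) (auto simp: height)
      fix t :: real assume "t \<in> {0<..<1}"
      hence pos: "1 + (v - 1) * t > 0" unfolding height using assms by (simp add: add_pos_nonneg)
      have "DERIV F t :> 2 * norm (b, v - 1) * (inverse (sqrt (1 + (v - 1) * t)) / 2 * (v - 1)) / (v - 1)"
        unfolding F_def[abs_def] using pos by (auto intro!: derivative_eq_intros)
      moreover have "2 * norm (b, v - 1) * (inverse z / 2 * (v - 1)) / (v - 1) = norm (b, v - 1) / z"
        if "z > 0" for z using False that by (simp add: field_simps)
      hence "2 * norm (b, v - 1) * (inverse (sqrt (1 + (v - 1) * t)) / 2 * (v - 1)) / (v - 1)
          = norm (b, v - 1) / sqrt (1 + (v - 1) * t)" using pos by simp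
      ultimately show "(F has_vector_derivative norm (b, v - 1) / sqrt (1 + (v - 1) * t)) (at t)"
        by (simp add: has_real_derivative_iff_has_vector_derivative)
    qed simp
    thus thesis by (rule that)
  qed
  hence "has_H_length g L"
    unfolding has_H_length_def vector_derivative_at[OF deriv] by (simp add: g_def)
  ultimately show ?thesis by blast
qed

lemma H_length_nonneg:
  assumes "admissible_curve g p q" "snd p \<ge> 0" "snd q \<ge> 0" "has_H_length g L" shows "L \<ge> 0"
proof -
  have ends: "g 0 = p" "g 1 = q" and inner: "\<And>t. t \<in> {0<..<1} \<Longrightarrow> snd (g t) > 0"
    using assms(1) unfolding admissible_curve_def by auto
  have "snd (g t) \<ge> 0" if "t \<in> {0..1}" for t
  proof -
    have "t = 0 \<or> t = 1 \<or> t \<in> {0<..<1}" using that by auto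
    thus ?thesis using ends inner[of t] assms(2,3) by (elim disjE) simp_all
  qed
  hence "\<And>t. t \<in> {0..1} \<Longrightarrow> 0 \<le> norm (vector_derivative g (at t)) / sqrt (snd (g t))" by simp
  with assms(4) show ?thesis unfolding has_H_length_def by (rule has_integral_nonneg)
qed

lemma dH_le_H_length:
  assumes "admissible_curve g (0, 1) q" "snd q \<ge> 0" "has_H_length g L" shows "dH (0, 1) q \<le> L"
  unfolding dH_def
proof (rule cInf_lower)
  show "L \<in> {L. \<exists>g. admissible_curve g (0, 1) q \<and> has_H_length g L}" using assms by blast
  show "bdd_below {L. \<exists>g. admissible_curve g (0, 1) q \<and> has_H_length g L}"
    using H_length_nonneg assms(2) by (intro bdd_belowI[of _ 0]) fastforce
qed

lemma line_calibration_le_dH: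
  assumes "b > 0" "v \<ge> 0" shows "line_calibration b (0, 1) \<le> dH (0, 1) (b, v)"
  unfolding dH_def
proof (rule cInf_greatest)
  show "{L. \<exists>g. admissible_curve g (0, 1) (b, v) \<and> has_H_length g L} \<noteq> {}"
    using segment_has_H_length[OF assms(2)] by blast
  fix L assume "L \<in> {L. \<exists>g. admissible_curve g (0, 1) (b, v) \<and> has_H_length g L}"
  then obtain g where g: "admissible_curve g (0, 1) (b, v)" and len: "has_H_length g L" by blast
  have ends: "g 0 = (0, 1)" "g 1 = (b, v)" and inner: "\<And>t. t \<in> {0<..<1} \<Longrightarrow> snd (g t) > 0"
    using g unfolding admissible_curve_def by auto
  have "snd (g t) > 0" if "t \<in> {0..1} - {1}" for t
  proof -
    have "t = 0 \<or> t \<in> {0<..<1}" using that by auto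
    thus ?thesis using ends inner by auto
  qed
  moreover have "snd (g t) \<ge> 0" if "t \<in> {0..1}" for t
    using calculation[of t] ends assms that by (cases "t = 1") auto
  ultimately have "line_calibration b (g 0) \<le> L"
    using g ends assms unfolding admissible_curve_def
    by (intro line_calibration_le_length[OF _ _ _ _ finite.insertI[OF finite.emptyI] _ len]) auto
  thus "line_calibration b (0, 1) \<le> L" using ends by simp
qed

lemma critical_angle:
  assumes "b > 0"
  defines "th \<equiv> 2 * aspect_angle (1 / b)"
  shows "0 < th" "th < pi" "b = (th + sin th) / (1 + cos th)"
    and "line_calibration b (0, 1) = th / cos (th / 2)"
proof -
  define w where "w = aspect_angle (1 / b)"
  have w: "0 < w" "w < pi/2" "aspect w = 1 / b"
    using aspect_angle[of "1/b"] aspect_angle_less[of "1/b"] assms unfolding w_def by auto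
  have c: "cos w > 0" using w by (intro cos_gt_zero) auto
  have D: "arc_width w > 0" using arc_width_pos w by simp
  have b: "b = arc_width w / (cos w)\<^sup>2" using w(3) D c assms unfolding aspect_def by (simp add: field_simps)
  have th: "th = 2 * w" unfolding th_def w_def ..
  show "0 < th" "th < pi" unfolding th using w by auto
  have "(th + sin th) / (1 + cos th) = (2 * (w + sin w * cos w)) / (2 * (cos w)\<^sup>2)"
    unfolding th cos_double_cos sin_double by (simp add: algebra_simps)
  also have "\<dots> = (w + sin w * cos w) / (cos w)\<^sup>2" by (rule mult_divide_mult_cancel_left) simp
  also have "\<dots> = b" unfolding b arc_width_def ..
  finally show "b = (th + sin th) / (1 + cos th)" ..
  have "b * arc_length_coeff w = (w / cos w)\<^sup>2"
    unfolding b arc_length_coeff_def using D c by (simp add: field_simps power2_eq_square)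
  hence "line_calibration b (0, 1) = 2 * (w / cos w)"
    unfolding line_calibration_def using c w by (simp add: w_def)
  thus "line_calibration b (0, 1) = th / cos (th / 2)" unfolding th by simp
qed

lemma Lambda_critical:
  assumes "0 < th" "th < pi" and b: "b = (th + sin th) / (1 + cos th)"
  shows "Lambda b th = th\<^sup>2 / (1 + cos th)"
proof -
  define s where "s = sin th"
  define c where "c = cos th"
  have sc: "s\<^sup>2 = (1 - c) * (1 + c)" unfolding s_def c_def using sin_cos_squared_add[of th]
    by (simp add: power2_eq_square algebra_simps)
  have "s \<ge> 0" unfolding s_def using assms by (intro sin_ge_zero) auto
  have "cos pi < cos th" using assms by (intro cos_monotone_0_pi) auto
  hence c: "1 + c > 0" unfolding c_def by simp
  have e: "th - s > 0" unfolding s_def using sin_less_self assms by simp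
  have bc: "b * (1 + c) = th + s" unfolding b s_def c_def using c unfolding c_def by simp
  have "2 * (th - s) * b + 2 * (1 - c) - th\<^sup>2 = (th * s / (1 + c))\<^sup>2"
  proof -
    have "(2 * (th - s) * b + 2 * (1 - c) - th\<^sup>2) * (1 + c)
        = 2 * (th - s) * (b * (1 + c)) + 2 * ((1 - c) * (1 + c)) - th\<^sup>2 * (1 + c)"
      by (simp add: algebra_simps)
    also have "\<dots> = th\<^sup>2 * (1 - c)" unfolding bc sc[symmetric] by (simp add: power2_eq_square algebra_simps)
    also have "\<dots> = th\<^sup>2 * ((1 - c) * (1 + c)) / (1 + c)" using c by simp
    also have "\<dots> = (th * s / (1 + c))\<^sup>2 * (1 + c)"
      unfolding sc[symmetric] using c by (simp add: power_divide power_mult_distrib power2_eq_square)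
    finally show ?thesis using c by simp
  qed
  hence sq: "sqrt (2 * (th - s) * b + 2 * (1 - c) - th\<^sup>2) = th * s / (1 + c)"
    using assms \<open>s \<ge> 0\<close> c by simp
  have "((th - s) * b + 2 * (1 - c) - th * s - (1 - c) * (th * s / (1 + c))) * (1 + c)
      = (th - s) * (th + s) + 2 * s\<^sup>2 - th * s * (1 + c) - (1 - c) * (th * s)"
    unfolding sc bc[symmetric] using c by (simp add: field_simps)
  also have "\<dots> = (th - s)\<^sup>2" by (simp add: power2_eq_square algebra_simps)
  finally have "(th - s) * b + 2 * (1 - c) - th * s - (1 - c) * (th * s / (1 + c)) = (th - s)\<^sup>2 / (1 + c)"
    using c by (simp add: eq_divide_eq)
  thus ?thesis unfolding Lambda_def s_def[symmetric] c_def[symmetric] sq using e by simp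
qed

lemma dH_attains_line_calibration:
  assumes "b > 0"
  shows "\<exists>v \<ge> 0. dH (0, 1) (b, v) = line_calibration b (0, 1)"
proof -
  define th where "th = 2 * aspect_angle (1 / b)"
  note crit = critical_angle[OF assms, folded th_def]
  have "cos pi < cos th" using crit by (intro cos_monotone_0_pi) auto
  hence c: "1 + cos th > 0" by simp
  define a where "a = 1 / (1 + cos th)"
  have "a > 0" unfolding a_def using c by simp
  define g where "g = cycloid a th (pi - th)"
  have "admissible_curve g (0, 1) (b, 2 * a)"
    unfolding admissible_curve_def
  proof (intro conjI ballI)
    show "g piecewise_C1_differentiable_on {0..1}" unfolding g_def by (rule cycloid_piecewise_C1)
    show "g 0 = (0, 1)" unfolding g_def cycloid_def a_def using c by simp
    have "fst (g 1) = a * (th + sin th)" unfolding g_def cycloid_def by (simp add: algebra_simps)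
    also have "\<dots> = b" unfolding crit(3) a_def by simp
    finally show "g 1 = (b, 2 * a)" unfolding g_def cycloid_def by (simp add: prod_eq_iff)
    fix t :: real assume "t \<in> {0<..<1}"
    hence "0 < th * t" "th * t < th" using crit by (simp_all add: mult_less_cancel_left1)
    hence "cos (pi - th + th * t) < 1" using crit by (intro cos_less_one) linarith+
    thus "snd (g t) > 0" unfolding g_def cycloid_def using \<open>a > 0\<close> by simp
  qed
  moreover have "has_H_length g (th * sqrt (2 * a))"
    unfolding g_def using has_H_length_cycloid \<open>a > 0\<close> crit by simp
  moreover have "th * sqrt (2 * a) = line_calibration b (0, 1)"
  proof -
    have "2 * a = (1 / cos (th / 2))\<^sup>2"
      unfolding a_def using cos_double_cos[of "th / 2"] by (simp add: power2_eq_square)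
    moreover have "cos (th / 2) > 0" using crit by (intro cos_gt_zero) auto
    ultimately show ?thesis unfolding crit(4) by simp
  qed
  ultimately have "dH (0, 1) (b, 2 * a) \<le> line_calibration b (0, 1)"
    using dH_le_H_length[of g "(b, 2 * a)"] \<open>a > 0\<close> by simp
  moreover have "line_calibration b (0, 1) \<le> dH (0, 1) (b, 2 * a)"
    using line_calibration_le_dH assms \<open>a > 0\<close> by simp
  ultimately show ?thesis using \<open>a > 0\<close> by (intro exI[of _ "2 * a"]) simp
qed

lemma Dfun_eq_half_sq_line_calibration:
  assumes "b > 0" shows "Dfun b 0 = (line_calibration b (0, 1))\<^sup>2 / 2"
proof -
  let ?D = "{(1/2) * (dH (0, 1) p)\<^sup>2 | p. p \<in> Lline b 0}"
  obtain v where "v \<ge> 0" and v: "dH (0, 1) (b, v) = line_calibration b (0, 1)"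
    using dH_attains_line_calibration[OF assms] by blast
  hence "(line_calibration b (0, 1))\<^sup>2 / 2 \<in> ?D" unfolding Lline_def by force
  moreover have "(line_calibration b (0, 1))\<^sup>2 / 2 \<le> x" if "x \<in> ?D" for x
  proof -
    obtain v' where "v' \<ge> 0" and x: "x = (1/2) * (dH (0, 1) (b, v'))\<^sup>2"
      using \<open>x \<in> ?D\<close> unfolding Lline_def by auto
    have "0 \<le> line_calibration b (0, 1)" using line_calibration_bounds(1)[of 0 b 1] assms by simp
    moreover have "line_calibration b (0, 1) \<le> dH (0, 1) (b, v')"
      using line_calibration_le_dH assms \<open>v' \<ge> 0\<close> by simp
    ultimately show ?thesis unfolding x by (simp add: power_mono)
  qed
  ultimately show ?thesis unfolding Dfun_def by (intro cInf_eq_minimum) auto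
qed

lemma Dfun_eq_min_Lambda:
  assumes "b > 0"
  obtains th where "0 < th" "th < pi" "b = (th + sin th) / (1 + cos th)" "Dfun b 0 = Lambda b th"
    "\<And>th'. 0 < th' \<Longrightarrow> th' \<le> pi \<Longrightarrow> th' / 2 \<le> b \<Longrightarrow> Lambda b th \<le> Lambda b th'"
proof
  define th where "th = 2 * aspect_angle (1 / b)"
  note crit = critical_angle[OF assms, folded th_def]
  show "0 < th" "th < pi" "b = (th + sin th) / (1 + cos th)" using crit by auto
  have "Lambda b th = (line_calibration b (0, 1))\<^sup>2 / 2"
  proof -
    have "cos (th / 2) > 0" using crit by (intro cos_gt_zero) auto
    moreover have "1 + cos th = 2 * (cos (th / 2))\<^sup>2" using cos_double_cos[of "th / 2"] by simp
    ultimately show ?thesis unfolding Lambda_critical[OF crit(1-3)] crit(4)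
      by (simp add: power_divide)
  qed
  thus "Dfun b 0 = Lambda b th" using Dfun_eq_half_sq_line_calibration[OF assms] by simp
  show "Lambda b th \<le> Lambda b th'" if "0 < th'" "th' \<le> pi" "th' / 2 \<le> b" for th'
    using half_sq_line_calibration_le_Lambda[OF that] \<open>Lambda b th = _\<close> by simp
qed

lemma critical_angle_bounds:
  assumes "0 < th" "th < pi" and b: "b = (th + sin th) / (1 + cos th)"
  shows "th \<le> 2 * b" and "b < pi/2 \<Longrightarrow> b \<le> 2 * th" and "pi/2 \<le> b \<Longrightarrow> pi/4 \<le> th"
proof -
  have "cos pi < cos th" using assms by (intro cos_monotone_0_pi) auto
  hence c: "1 + cos th > 0" by simp
  have s: "sin th \<ge> 0" using assms by (intro sin_ge_zero) auto
  have bc: "b * (1 + cos th) = th + sin th" unfolding b using c by simp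
  have "th * cos th \<le> th * 1" using assms by (intro mult_left_mono) auto
  hence "th * (1 + cos th) \<le> (2 * b) * (1 + cos th)" using bc s by (simp add: algebra_simps)
  thus "th \<le> 2 * b" using c by simp
  have small: "b \<le> 2 * th" if "th \<le> pi/2"
  proof -
    have "0 \<le> cos th" using that assms by (intro cos_ge_zero) auto
    moreover have "b \<ge> 0" unfolding b using assms s c by simp
    ultimately have "b \<le> b * (1 + cos th)" by (simp add: algebra_simps)
    also have "\<dots> \<le> 2 * th" unfolding bc using sin_x_le_x[of th] assms by simp
    finally show ?thesis .
  qed
  show "b \<le> 2 * th" if "b < pi/2"
  proof (cases "th \<le> pi/2")
    case False
    hence "cos th < cos (pi/2)" using assms by (intro cos_monotone_0_pi) auto
    hence "th * cos th \<le> 0" using assms by (simp add: mult_nonneg_nonpos)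
    hence "th * (1 + cos th) \<le> b * (1 + cos th)" using bc s assms by (simp add: algebra_simps)
    hence "th \<le> b" using c by simp
    thus ?thesis using False that by simp
  qed (rule small)
  show "pi/4 \<le> th" if "pi/2 \<le> b"
  proof (cases "th \<le> pi/2")
    case True
    thus ?thesis using small that by simp
  qed (use pi_gt_zero in linarith)
qed

theorem theorem2p1:
  fixes \<beta> :: real
  shows "(0 < \<beta> \<and> \<beta> < pi / 2 \<longrightarrow>
           (\<exists>\<theta>0\<in>{\<beta>/11..2*\<beta>}. Dfun \<beta> 0 = Lambda \<beta> \<theta>0 \<and>
              (\<forall>\<theta>\<in>{\<beta>/11..2*\<beta>}. Lambda \<beta> \<theta>0 \<le> Lambda \<beta> \<theta>)))
       \<and> (pi / 2 \<le> \<beta> \<longrightarrow>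
           (\<exists>\<theta>0\<in>{1/7..pi}. Dfun \<beta> 0 = Lambda \<beta> \<theta>0 \<and>
              (\<forall>\<theta>\<in>{1/7..pi}. Lambda \<beta> \<theta>0 \<le> Lambda \<beta> \<theta>)))"
proof (intro conjI impI)
  assume \<beta>: "0 < \<beta> \<and> \<beta> < pi / 2"
  hence "0 < \<beta>" by simp
  then obtain th where th: "0 < th" "th < pi" "\<beta> = (th + sin th) / (1 + cos th)"
    and "Dfun \<beta> 0 = Lambda \<beta> th"
    and min: "\<And>th'. 0 < th' \<Longrightarrow> th' \<le> pi \<Longrightarrow> th' / 2 \<le> \<beta> \<Longrightarrow> Lambda \<beta> th \<le> Lambda \<beta> th'"
    by (rule Dfun_eq_min_Lambda) blast
  moreover have "th \<in> {\<beta>/11..2*\<beta>}" using critical_angle_bounds[OF th] \<beta> by simp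
  moreover have "Lambda \<beta> th \<le> Lambda \<beta> \<theta>" if "\<theta> \<in> {\<beta>/11..2*\<beta>}" for \<theta>
    using that \<beta> by (intro min) auto
  ultimately show "\<exists>\<theta>0\<in>{\<beta>/11..2*\<beta>}. Dfun \<beta> 0 = Lambda \<beta> \<theta>0 \<and>
      (\<forall>\<theta>\<in>{\<beta>/11..2*\<beta>}. Lambda \<beta> \<theta>0 \<le> Lambda \<beta> \<theta>)" by blast
next
  assume \<beta>: "pi / 2 \<le> \<beta>"
  hence "0 < \<beta>" using pi_gt_zero by linarith
  then obtain th where th: "0 < th" "th < pi" "\<beta> = (th + sin th) / (1 + cos th)"
    and "Dfun \<beta> 0 = Lambda \<beta> th"
    and min: "\<And>th'. 0 < th' \<Longrightarrow> th' \<le> pi \<Longrightarrow> th' / 2 \<le> \<beta> \<Longrightarrow> Lambda \<beta> th \<le> Lambda \<beta> th'"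
    by (rule Dfun_eq_min_Lambda) blast
  moreover have "th \<in> {1/7..pi}" using critical_angle_bounds(3)[OF th \<beta>] th pi_gt3 by simp
  moreover have "Lambda \<beta> th \<le> Lambda \<beta> \<theta>" if "\<theta> \<in> {1/7..pi}" for \<theta>
    using that \<beta> by (intro min) auto
  ultimately show "\<exists>\<theta>0\<in>{1/7..pi}. Dfun \<beta> 0 = Lambda \<beta> \<theta>0 \<and>
      (\<forall>\<theta>\<in>{1/7..pi}. Lambda \<beta> \<theta>0 \<le> Lambda \<beta> \<theta>)" by blast
qed

end
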